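(* Let $\bm{\mu}_0,\bm{\mu}_1\in\mathbb{R}^d$, $\epsilon>0$, and define the GLRT costs $C_k(\mathbf{x})=\|g_\epsilon(\mathbf{x}-\bm{\mu}_k)\|_2^2$ for $k=0,1$. Set $\mathbf{e}^*=-\epsilon\,\mathrm{sign}(\bm{\mu}_0-\bm{\mu}_1)$, with $\mathrm{sign}$ applied coordinate-wise. Then for every $\mathbf{n}\in\mathbb{R}^d$ and every $\mathbf{e}\in\mathbb{R}^d$ with $\|\mathbf{e}\|_\infty\le\epsilon$, $$C_1(\bm{\mu}_0+\mathbf{e}+\mathbf{n})-C_0(\bm{\mu}_0+\mathbf{e}+\mathbf{n})\ \ge\ C_1(\bm{\mu}_0+\mathbf{e}^*+\mathbf{n})-C_0(\bm{\mu}_0+\mathbf{e}^*+\mathbf{n}).$$ Consequently, under hypothesis $\mathcal{H}_0$, where $\mathbf{X}=\bm{\mu}_0+\mathbf{e}+\mathbf{N}$ with $\mathbf{N}\sim\mathcal{N}(\mathbf{0},\sigma^2 I_d)$ and $\sigma>0$: (i) for every realization $\mathbf{n}$, if some admissible $\mathbf{e}$ makes $C_1<C_0$, then $\mathbf{e}^*$ also makes $C_1<C_0$ (noise-aware optimality); (ii) $\mathbf{e}^*$ maximizes $\Pr(C_1(\mathbf{X})<C_0(\mathbf{X}))$ over all $\mathbf{e}$ with $\|\mathbf{e}\|_\infty\le\epsilon$ (noise-agnostic optimality). Symmetrically, under $\mathcal{H}_1$ the attack $-\epsilon\,\mathrm{sign}(\bm{\mu}_1-\bm{\mu}_0)$ is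 worst-case in both senses.
   Context: For $\epsilon>0$, $g_\epsilon(x)=\mathrm{sign}(x)\max(0,|x|-\epsilon)$ with $\mathrm{sign}(0)=0$, applied coordinate-wise. The GLRT classifier decides $\mathcal{H}_1$ when $C_1<C_0$. An attack is a vector $\mathbf{e}$ with $\|\mathbf{e}\|_\infty\le\epsilon$, which may depend on the true hypothesis. *)

theory Defs
  imports "HOL-Analysis.Analysis" "HOL-Probability.Probability"
begin

definition soft_thr :: "real \<Rightarrow> real \<Rightarrow> real" where
  "soft_thr eps x = sgn x * max 0 (\<bar>x\<bar> - eps)"

definition glrt_cost :: "real \<Rightarrow> real ^ 'd \<Rightarrow> real ^ 'd \<Rightarrow> real" where
  "glrt_cost eps mu x = (norm (\<chi> i. soft_thr eps ((x - mu) $ i)))\<^sup>2"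

definition vsgn :: "real ^ 'd \<Rightarrow> real ^ 'd" where
  "vsgn v = (\<chi> i. sgn (v $ i))"

definition norm_inf :: "real ^ 'd \<Rightarrow> real" where
  "norm_inf v = Max (range (\<lambda>i. \<bar>v $ i\<bar>))"

definition gauss_iso :: "real \<Rightarrow> (real ^ 'd) measure" where
  "gauss_iso \<sigma> = density lborel (\<lambda>x. ennreal (\<Prod>i\<in>UNIV. normal_density 0 \<sigma> (x $ i)))"

end

theory Submission
  imports Defs
begin

text \<open>
  Writing \<open>h = (soft_thr \<epsilon>)\<^sup>2\<close>, both costs are sums over coordinates, and the gap
  \<open>C\<^sub>1 - C\<^sub>0\<close> at \<open>\<mu>\<^sub>0 + e + n\<close> is the sum of the increments
  \<open>h (\<delta>\<^sub>i + e\<^sub>i + n\<^sub>i) - h (e\<^sub>i + n\<^sub>i)\<close> with \<open>\<delta> = \<mu>\<^sub>0 - \<mu>\<^sub>1\<close>.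
  Since \<open>h t = (t - \<epsilon>)\<^sub>+\<^sup>2 + (-t - \<epsilon>)\<^sub>+\<^sup>2\<close> is convex, an increment over a fixed shift
  is a nondecreasing function of the base point, so each summand is minimised over
  \<open>\<bar>e\<^sub>i\<bar> \<le> \<epsilon>\<close> by moving the base point as far as possible against the shift, i.e.
  by \<open>e\<^sub>i = -\<epsilon> sgn \<delta>\<^sub>i\<close>, simultaneously for every noise value.
  Pointwise domination of the gap gives inclusion of the decision regions, hence both
  optimality statements; \<open>H\<^sub>1\<close> is the same argument with the means swapped.
\<close>

lemma power2_soft_thr:
  assumes "\<epsilon> > 0"
  shows "(soft_thr \<epsilon> t)\<^sup>2 = (max 0 (t - \<epsilon>))\<^sup>2 + (max 0 (- t - \<epsilon>))\<^sup>2"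
  using assms unfolding soft_thr_def by (auto simp: sgn_if max_def power2_eq_square algebra_simps)

lemma power2_max_0_increment_mono:
  fixes a b d :: real
  assumes "d \<ge> 0" and "a \<le> b"
  shows "(max 0 (a + d))\<^sup>2 - (max 0 a)\<^sup>2 \<le> (max 0 (b + d))\<^sup>2 - (max 0 b)\<^sup>2"
proof -
  have "(max 0 (x + d))\<^sup>2 - (max 0 x)\<^sup>2
      = (max 0 (x + d) - max 0 x) * (max 0 (x + d) + max 0 x)" for x :: real
    by (simp add: power2_eq_square algebra_simps)
  moreover have "max 0 (a + d) - max 0 a \<le> max 0 (b + d) - max 0 b"
    using assms by (auto simp: max_def)
  moreover have "max 0 (a + d) + max 0 a \<le> max 0 (b + d) + max 0 b"
    using assms by auto
  ultimately show ?thesis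
    using assms by (simp add: mult_mono)
qed

lemma power2_soft_thr_increment_mono:
  assumes "\<epsilon> > 0" and "d \<ge> 0" and "a \<le> b"
  shows "(soft_thr \<epsilon> (d + a))\<^sup>2 - (soft_thr \<epsilon> a)\<^sup>2 \<le> (soft_thr \<epsilon> (d + b))\<^sup>2 - (soft_thr \<epsilon> b)\<^sup>2"
proof -
  have "(max 0 (d + a - \<epsilon>))\<^sup>2 - (max 0 (a - \<epsilon>))\<^sup>2 \<le> (max 0 (d + b - \<epsilon>))\<^sup>2 - (max 0 (b - \<epsilon>))\<^sup>2"
    using assms power2_max_0_increment_mono[of d "a - \<epsilon>" "b - \<epsilon>"] by (simp add: algebra_simps)
  moreover have "(max 0 (- b - \<epsilon>))\<^sup>2 - (max 0 (- (d + b) - \<epsilon>))\<^sup>2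
      \<le> (max 0 (- a - \<epsilon>))\<^sup>2 - (max 0 (- (d + a) - \<epsilon>))\<^sup>2"
  proof -
    have shift: "- (d + x) - \<epsilon> + d = - x - \<epsilon>" for x :: real
      by simp
    have "- (d + b) - \<epsilon> \<le> - (d + a) - \<epsilon>"
      using assms(3) by simp
    from power2_max_0_increment_mono[OF assms(2) this] show ?thesis
      by (simp only: shift)
  qed
  ultimately show ?thesis
    unfolding power2_soft_thr[OF assms(1)] by linarith
qed

lemma power2_soft_thr_increment_sign_min:
  assumes "\<epsilon> > 0" and "\<bar>x\<bar> \<le> \<epsilon>"
  shows "(soft_thr \<epsilon> (\<delta> + (- \<epsilon> * sgn \<delta>) + m))\<^sup>2 - (soft_thr \<epsilon> ((- \<epsilon> * sgn \<delta>) + m))\<^sup>2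
      \<le> (soft_thr \<epsilon> (\<delta> + x + m))\<^sup>2 - (soft_thr \<epsilon> (x + m))\<^sup>2"
proof (cases \<delta> "0::real" rule: linorder_cases)
  case greater
  then show ?thesis
    using assms power2_soft_thr_increment_mono[of \<epsilon> \<delta> "m - \<epsilon>" "x + m"]
    by (simp add: algebra_simps)
next
  case less
  then show ?thesis
    using assms power2_soft_thr_increment_mono[of \<epsilon> "- \<delta>" "x + m + \<delta>" "\<epsilon> + m + \<delta>"]
    by (simp add: algebra_simps)
qed simp

lemma abs_le_norm_inf: "\<bar>v $ i\<bar> \<le> norm_inf v"
  unfolding norm_inf_def by (rule Max_ge) auto

lemma glrt_cost_eq_sum: "glrt_cost \<epsilon> \<mu> x = (\<Sum>i\<in>UNIV. (soft_thr \<epsilon> (x $ i - \<mu> $ i))\<^sup>2)"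
  unfolding glrt_cost_def power2_norm_eq_inner inner_vec_def by (simp add: power2_eq_square)

theorem sign_attack_minimizes_glrt_gap:
  fixes a b e n :: "real ^ 'd"
  assumes "\<epsilon> > 0" and "norm_inf e \<le> \<epsilon>"
  defines "e' \<equiv> - \<epsilon> *\<^sub>R vsgn (a - b)"
  shows "glrt_cost \<epsilon> b (a + e' + n) - glrt_cost \<epsilon> a (a + e' + n)
      \<le> glrt_cost \<epsilon> b (a + e + n) - glrt_cost \<epsilon> a (a + e + n)"
proof -
  have "(\<Sum>i\<in>UNIV. (soft_thr \<epsilon> ((a - b) $ i + (- \<epsilon> * sgn ((a - b) $ i)) + n $ i))\<^sup>2
                  - (soft_thr \<epsilon> ((- \<epsilon> * sgn ((a - b) $ i)) + n $ i))\<^sup>2)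
      \<le> (\<Sum>i\<in>UNIV. (soft_thr \<epsilon> ((a - b) $ i + e $ i + n $ i))\<^sup>2 - (soft_thr \<epsilon> (e $ i + n $ i))\<^sup>2)"
    using assms(2) abs_le_norm_inf[of e]
    by (intro sum_mono power2_soft_thr_increment_sign_min[OF assms(1)]) (blast intro: order_trans)
  then show ?thesis
    unfolding glrt_cost_eq_sum sum_subtractf[symmetric] e'_def
    by (simp add: vsgn_def algebra_simps)
qed

lemma borel_measurable_glrt_cost [measurable]: "glrt_cost \<epsilon> \<mu> \<in> borel_measurable borel"
  unfolding glrt_cost_eq_sum[abs_def] soft_thr_def by measurable

lemma prob_space_gauss_iso:
  assumes "\<sigma> > 0"
  shows "prob_space (gauss_iso \<sigma> :: (real ^ 'd) measure)"
proof
  have density_eq: "ennreal (\<Prod>i\<in>UNIV. normal_density 0 \<sigma> (x $ i))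
      = (\<Prod>b\<in>Basis. ennreal (normal_density 0 \<sigma> (x \<bullet> b)))" for x :: "real ^ 'd"
  proof -
    have Basis_eq: "(Basis :: (real ^ 'd) set) = range (\<lambda>i. axis i 1)"
      unfolding Basis_vec_def by auto
    have inj: "inj (\<lambda>i::'d. axis i (1::real))"
      by (auto simp: inj_def axis_eq_axis)
    have "(\<Prod>b\<in>Basis. ennreal (normal_density 0 \<sigma> (x \<bullet> b)))
        = (\<Prod>i\<in>UNIV. ennreal (normal_density 0 \<sigma> (x \<bullet> axis i 1)))"
      unfolding Basis_eq by (subst prod.reindex[OF inj]) simp
    then show ?thesis
      by (simp add: inner_axis prod_ennreal normal_density_nonneg)
  qed
  have "emeasure (gauss_iso \<sigma>) (space (gauss_iso \<sigma> :: (real ^ 'd) measure))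
      = (\<integral>\<^sup>+x. (\<Prod>b\<in>Basis. ennreal (normal_density 0 \<sigma> (x \<bullet> b))) \<partial>(lborel :: (real ^ 'd) measure))"
    unfolding gauss_iso_def density_eq by (subst emeasure_density) auto
  also have "\<dots> = (\<Prod>b\<in>(Basis :: (real ^ 'd) set). \<integral>\<^sup>+t. ennreal (normal_density 0 \<sigma> t) \<partial>lborel)"
    by (rule nn_integral_lborel_prod) auto
  also have "\<dots> = 1"
    using prob_space.emeasure_space_1[OF prob_space_normal_density[OF assms, of 0]]
    by (simp add: emeasure_density)
  finally show "emeasure (gauss_iso \<sigma>) (space (gauss_iso \<sigma> :: (real ^ 'd) measure)) = 1" .
qed

lemma measure_gauss_iso_mono:
  assumes "\<sigma> > 0" and "{x. Q x} \<in> sets borel" and "\<And>x. P x \<Longrightarrow> Q x"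
  shows "measure (gauss_iso \<sigma>) {x. P x} \<le> measure (gauss_iso \<sigma>) {x :: real ^ 'd. Q x}"
proof -
  interpret prob_space "gauss_iso \<sigma> :: (real ^ 'd) measure"
    using assms(1) by (rule prob_space_gauss_iso)
  show ?thesis
    using assms(2,3) by (intro finite_measure_mono) (auto simp: gauss_iso_def)
qed

theorem proposition2:
  fixes \<mu>0 \<mu>1 :: "real ^ 'd" and \<epsilon> \<sigma> :: real
  assumes eps_pos: "\<epsilon> > 0" and sigma_pos: "\<sigma> > 0"
  defines "C0 \<equiv> glrt_cost \<epsilon> \<mu>0" and "C1 \<equiv> glrt_cost \<epsilon> \<mu>1"
      and "e0 \<equiv> - \<epsilon> *\<^sub>R vsgn (\<mu>0 - \<mu>1)"
      and "e1 \<equiv> - \<epsilon> *\<^sub>R vsgn (\<mu>1 - \<mu>0)"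
  shows
    \<comment> \<open>main inequality (H0 attack)\<close>
    "(\<forall>n e. norm_inf e \<le> \<epsilon> \<longrightarrow>
        C1 (\<mu>0 + e + n) - C0 (\<mu>0 + e + n) \<ge> C1 (\<mu>0 + e0 + n) - C0 (\<mu>0 + e0 + n))
     \<comment> \<open>(i) noise-aware optimality under H0\<close>
     \<and> (\<forall>n. (\<exists>e. norm_inf e \<le> \<epsilon> \<and> C1 (\<mu>0 + e + n) < C0 (\<mu>0 + e + n))
            \<longrightarrow> C1 (\<mu>0 + e0 + n) < C0 (\<mu>0 + e0 + n))
     \<comment> \<open>(ii) noise-agnostic optimality under H0\<close>
     \<and> (\<forall>e. norm_inf e \<le> \<epsilon> \<longrightarrow>
          measure (gauss_iso \<sigma>) {n. C1 (\<mu>0 + e + n) < C0 (\<mu>0 + e + n)}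
          \<le> measure (gauss_iso \<sigma>) {n. C1 (\<mu>0 + e0 + n) < C0 (\<mu>0 + e0 + n)})
     \<comment> \<open>symmetric statements under H1 (error = not deciding H1)\<close>
     \<and> (\<forall>n e. norm_inf e \<le> \<epsilon> \<longrightarrow>
        C0 (\<mu>1 + e + n) - C1 (\<mu>1 + e + n) \<ge> C0 (\<mu>1 + e1 + n) - C1 (\<mu>1 + e1 + n))
     \<and> (\<forall>n. (\<exists>e. norm_inf e \<le> \<epsilon> \<and> \<not> C1 (\<mu>1 + e + n) < C0 (\<mu>1 + e + n))
            \<longrightarrow> \<not> C1 (\<mu>1 + e1 + n) < C0 (\<mu>1 + e1 + n))
     \<and> (\<forall>e. norm_inf e \<le> \<epsilon> \<longrightarrow>
          measure (gauss_iso \<sigma>) {n. \<not> C1 (\<mu>1 + e + n) < C0 (\<mu>1 + e + n)}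
          \<le> measure (gauss_iso \<sigma>) {n. \<not> C1 (\<mu>1 + e1 + n) < C0 (\<mu>1 + e1 + n)})"
proof -
  have gap0: "C1 (\<mu>0 + e0 + n) - C0 (\<mu>0 + e0 + n) \<le> C1 (\<mu>0 + e + n) - C0 (\<mu>0 + e + n)"
    if "norm_inf e \<le> \<epsilon>" for e n
    unfolding C0_def C1_def e0_def using sign_attack_minimizes_glrt_gap[OF eps_pos that] .
  have gap1: "C0 (\<mu>1 + e1 + n) - C1 (\<mu>1 + e1 + n) \<le> C0 (\<mu>1 + e + n) - C1 (\<mu>1 + e + n)"
    if "norm_inf e \<le> \<epsilon>" for e n
    unfolding C0_def C1_def e1_def using sign_attack_minimizes_glrt_gap[OF eps_pos that] .
  have flip0: "C1 (\<mu>0 + e0 + n) < C0 (\<mu>0 + e0 + n)"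
    if "norm_inf e \<le> \<epsilon>" "C1 (\<mu>0 + e + n) < C0 (\<mu>0 + e + n)" for e n
    using gap0[OF that(1), of n] that(2) by linarith
  have flip1: "\<not> C1 (\<mu>1 + e1 + n) < C0 (\<mu>1 + e1 + n)"
    if "norm_inf e \<le> \<epsilon>" "\<not> C1 (\<mu>1 + e + n) < C0 (\<mu>1 + e + n)" for e n
    using gap1[OF that(1), of n] that(2) by linarith
  have regions: "{n. C1 (c + n) < C0 (c + n)} \<in> sets borel"
    "{n. \<not> C1 (c + n) < C0 (c + n)} \<in> sets borel" for c :: "real ^ 'd"
    unfolding C0_def C1_def by measurable
  have prob0: "measure (gauss_iso \<sigma>) {n. C1 (\<mu>0 + e + n) < C0 (\<mu>0 + e + n)}
      \<le> measure (gauss_iso \<sigma>) {n. C1 (\<mu>0 + e0 + n) < C0 (\<mu>0 + e0 + n)}"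
    if "norm_inf e \<le> \<epsilon>" for e
    using regions(1) flip0[OF that] by (rule measure_gauss_iso_mono[OF sigma_pos])
  have prob1: "measure (gauss_iso \<sigma>) {n. \<not> C1 (\<mu>1 + e + n) < C0 (\<mu>1 + e + n)}
      \<le> measure (gauss_iso \<sigma>) {n. \<not> C1 (\<mu>1 + e1 + n) < C0 (\<mu>1 + e1 + n)}"
    if "norm_inf e \<le> \<epsilon>" for e
    using regions(2) flip1[OF that] by (rule measure_gauss_iso_mono[OF sigma_pos])
  show ?thesis
    using gap0 gap1 flip0 flip1 prob0 prob1 by blast
qed

end
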